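(* Let $b>0$ and let $f\in C^2(\mathbb{R}^+)$ with $f(x)\ge0$, and set $\lambda_{n,b}=2\int_0^\infty\phi_n(bx)f(x)\,\mathrm{d}x$ for $n\in\mathbb{N}^\star$ (i.e. $\lambda_{n,b}=2\int_0^\infty\phi_n(bx)\frac{\mathrm{d}\mu(x)}{x}$ with $\mathrm{d}\mu(x)=xf(x)\,\mathrm{d}x$), where $\phi_n(x)=\int_0^\pi e^{-2x\sin\eta}e^{2in\eta}\,\mathrm{d}\eta$. Assume there is a constant $C>0$ such that (1) $\limsup_{x\to0^+}x|f(x)|+\limsup_{x\to0^+}x^2|f'(x)|\le C$; (2) $\lim_{x\to+\infty}f(x)=0$ and $\lim_{x\to+\infty}xf'(x)=0$; (3) $f''(x)\ge0$ for all $x>0$. Then $\lambda_{n+1,b}+\lambda_{n-1,b}-2\lambda_{n,b}\ge0$ for all $n\ge2$. *)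

theory Defs
  imports "HOL-Analysis.Analysis"
begin

definition phi :: "nat \<Rightarrow> real \<Rightarrow> complex" where
  "phi n x = integral {0..pi}
     (\<lambda>\<eta>. of_real (exp (- 2 * x * sin \<eta>)) * cis (2 * real n * \<eta>))"

definition lam :: "(real \<Rightarrow> real) \<Rightarrow> nat \<Rightarrow> real \<Rightarrow> complex" where
  "lam f n b = 2 * integral {0<..} (\<lambda>x. phi n (b * x) * of_real (f x))"

end

theory Submission
  imports Defs "HOL-Complex_Analysis.Complex_Analysis"
begin

(*
  For m \<ge> 1 and y \<ge> 0, Cauchy's theorem for z^(2m-1) exp (i y (z - 1/z)) on the upper half of
  the unit disc shows that phi_m(y) is real and equals -\<integral>_{-1}^{1} t^(2m-1) sin (y (t - 1/t)) dt;
  hence phi_(k+3) + phi_(k+1) - 2 phi_(k+2) is \<integral>_{-1}^{1} t^(2k+1) (1 - t^2)^2 sin (y (1/t - t)) dt.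
  Convexity and x f'(x) \<rightarrow> 0 make f nonincreasing, and integrating by parts against
  1 - cos (\<omega> x) gives \<omega> \<integral>_e^R sin (\<omega> x) f(x) dx \<ge> -(\<omega> e)^2 f(e) / 2 for nonnegative
  nonincreasing f. Exchanging the two integrals, the integral over [e, R] of the second
  difference at b x times f(x) is at least -b e^2 f(e) = O(e), since x f(x) \<le> C + 1 near 0.
  The bounds |phi_m(y) - phi_(m+1)(y)| \<le> 4 \<pi> y and \<le> 2 \<pi> (2m + 1) / y^2 make all integrands
  absolutely integrable, so one may let e \<rightarrow> 0 and R \<rightarrow> \<infinity>.
*)

definition phi_re :: "nat \<Rightarrow> real \<Rightarrow> real" where
  "phi_re m y = Re (phi m y)"

lemma has_integral_phi:
  "((\<lambda>\<eta>. of_real (exp (- 2 * y * sin \<eta>)) * cis (2 * real m * \<eta>)) has_integral phi m y) {0..pi}"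
  unfolding phi_def
  by (intro integrable_integral integrable_continuous_interval continuous_intros)

lemma has_integral_phi_re:
  "((\<lambda>\<eta>. exp (- 2 * y * sin \<eta>) * cos (2 * real m * \<eta>)) has_integral phi_re m y) {0..pi}"
  using has_integral_Re[OF has_integral_phi[of y m]] by (simp add: phi_re_def)

lemma continuous_on_phi_re: "continuous_on UNIV (phi_re m)"
proof -
  have "continuous_on UNIV
          (\<lambda>y. integral (cbox 0 pi) (\<lambda>\<eta>. exp (- 2 * y * sin \<eta>) * cos (2 * real m * \<eta>)))"
    by (intro integral_continuous_on_param) (auto intro!: continuous_intros simp: case_prod_beta)
  moreover have "phi_re m y = integral (cbox 0 pi) (\<lambda>\<eta>. exp (- 2 * y * sin \<eta>) * cos (2 * real m * \<eta>))"
    for y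
    unfolding cbox_interval by (rule integral_unique[OF has_integral_phi_re, symmetric])
  ultimately show ?thesis by simp
qed

subsection \<open>A contour integral representation of phi\<close>

definition upper_half_disc :: "complex set" where
  "upper_half_disc = cball 0 1 \<inter> {z. 0 \<le> Im z}"

text \<open>On the unit circle \<open>z - 1/z = 2 \<i> sin \<eta>\<close> for \<open>z = cis \<eta>\<close>, so integrating this kernel
  over the upper semicircle gives \<open>\<i> * phi m y\<close>. At \<open>z = 0\<close> it vanishes because \<open>1 / 0 = 0\<close>.\<close>
definition phi_kernel :: "nat \<Rightarrow> real \<Rightarrow> complex \<Rightarrow> complex" where
  "phi_kernel m y z = z ^ (2 * m - 1) * exp (\<i> * of_real y * (z - 1 / z))"

lemma norm_exp_upper_half_plane_le_1:
  assumes "y \<ge> 0" and "Im w \<ge> 0"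
  shows "norm (exp (\<i> * of_real y * (w - 1 / w))) \<le> 1"
proof -
  have "Re (\<i> * of_real y * (w - 1 / w)) = - y * (Im w + Im w / ((Re w)\<^sup>2 + (Im w)\<^sup>2))"
    by (simp add: Im_divide Re_divide power2_eq_square algebra_simps)
  also have "\<dots> \<le> 0"
    using assms by (intro mult_nonpos_nonneg) (auto intro!: add_nonneg_nonneg divide_nonneg_nonneg)
  finally show ?thesis by (simp add: norm_exp_eq_Re)
qed

lemma holomorphic_on_phi_kernel: "phi_kernel m y holomorphic_on - {0}"
  unfolding phi_kernel_def by (intro holomorphic_intros) auto

lemma continuous_on_phi_kernel:
  assumes "m \<ge> 1" and "y \<ge> 0"
  shows "continuous_on upper_half_disc (phi_kernel m y)"
proof (clarsimp simp: continuous_on_eq_continuous_within)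
  fix z assume "z \<in> upper_half_disc"
  show "continuous (at z within upper_half_disc) (phi_kernel m y)"
  proof (cases "z = 0")
    case True
    have bound: "norm (phi_kernel m y w) \<le> norm w ^ (2 * m - 1)" if "w \<in> upper_half_disc" for w
      using norm_exp_upper_half_plane_le_1[OF \<open>y \<ge> 0\<close>, of w] that
      unfolding phi_kernel_def norm_mult norm_power upper_half_disc_def
      by (simp add: mult_left_le)
    have "((\<lambda>w. norm w ^ (2 * m - 1)) \<longlongrightarrow> 0) (at (0::complex) within upper_half_disc)"
      using assms tendsto_power[OF tendsto_norm_zero[OF tendsto_ident_at], of "2 * m - 1"]
      by (simp add: power_0_left)
    then have "(phi_kernel m y \<longlongrightarrow> 0) (at 0 within upper_half_disc)"
      by (rule Lim_null_comparison[rotated])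
         (use bound in \<open>auto simp: eventually_at_filter intro!: always_eventually\<close>)
    moreover have "phi_kernel m y 0 = 0"
      using assms by (simp add: phi_kernel_def)
    ultimately show ?thesis
      using True by (simp add: continuous_within)
  next
    case False
    then have "phi_kernel m y field_differentiable at z"
      using holomorphic_on_phi_kernel by (intro holomorphic_on_imp_differentiable_at[of _ "- {0}"]) auto
    then show ?thesis
      by (simp add: field_differentiable_imp_continuous_at continuous_at_imp_continuous_within)
  qed
qed

lemma phi_kernel_on_circle:
  assumes "m \<ge> 1"
  shows "phi_kernel m y (cis t) * \<i> * cis t
       = \<i> * (of_real (exp (- 2 * y * sin t)) * cis (2 * real m * t))"
proof -
  have power: "cis t ^ (2 * m - 1) * cis t = cis (2 * real m * t)"
    using assms Complex.DeMoivre[of t "2 * m"] by (simp flip: power_Suc2)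
  have "\<i> * of_real y * (cis t - 1 / cis t) = complex_of_real (- 2 * y * sin t)"
    by (simp add: divide_inverse complex_eq_iff)
  then have "exp (\<i> * of_real y * (cis t - 1 / cis t)) = of_real (exp (- 2 * y * sin t))"
    by (simp only: exp_of_real)
  with power show ?thesis
    unfolding phi_kernel_def by (simp add: mult_ac)
qed

lemma has_contour_integral_phi_kernel_arc:
  assumes "m \<ge> 1"
  shows "(phi_kernel m y has_contour_integral \<i> * phi m y) (part_circlepath 0 1 0 pi)"
proof -
  have "((\<lambda>t. phi_kernel m y (cis t) * \<i> * cis t) has_integral \<i> * phi m y) {0..pi}"
    unfolding phi_kernel_on_circle[OF assms] by (rule has_integral_mult_right[OF has_integral_phi])
  then show ?thesis
    by (simp add: has_contour_integral_part_circlepath_iff)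
qed

lemma has_integral_phi_kernel_segment:
  assumes "m \<ge> 1" and "y \<ge> 0"
  shows "((\<lambda>t. phi_kernel m y (of_real t)) has_integral - (\<i> * phi m y)) {-1..1}"
proof -
  define arc where "arc = part_circlepath 0 1 0 pi"
  define line where "line = linepath (-1::complex) 1"
  have convex: "convex upper_half_disc"
    unfolding upper_half_disc_def by (intro convex_Int convex_cball convex_halfspace_Im_ge)
  have cont: "continuous_on upper_half_disc (phi_kernel m y)"
    using continuous_on_phi_kernel[OF assms] .
  have ends: "-1 \<in> upper_half_disc" "1 \<in> upper_half_disc"
    by (auto simp: upper_half_disc_def)
  have arc_sub: "path_image arc \<subseteq> upper_half_disc"
    unfolding arc_def upper_half_disc_def using sin_ge_zero
    by (auto simp: path_image_part_circlepath Im_exp)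
  have line_sub: "path_image line \<subseteq> upper_half_disc"
    unfolding line_def using closed_segment_subset[OF ends convex] by simp
  have joins: "pathfinish arc = pathstart line"
    by (simp add: arc_def line_def)
  have cauchy: "(phi_kernel m y has_contour_integral 0) (arc +++ line)"
  proof (rule Cauchy_theorem_convex[OF cont convex, of "{0}"])
    show "phi_kernel m y field_differentiable at x" if "x \<in> interior upper_half_disc - {0}" for x
      using that holomorphic_on_phi_kernel
      by (intro holomorphic_on_imp_differentiable_at[of _ "- {0}"]) auto
    show "path_image (arc +++ line) \<subseteq> upper_half_disc"
      using arc_sub line_sub joins by (simp add: path_image_join)
  qed (use joins in \<open>auto simp: arc_def line_def intro!: valid_path_join\<close>)
  obtain L where line_int: "(phi_kernel m y has_contour_integral L) line"
    using contour_integrable_continuous_linepath[of "-1" 1 "phi_kernel m y"] continuous_on_subset[OF cont line_sub]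
    by (auto simp: line_def contour_integrable_on_def)
  have "(phi_kernel m y has_contour_integral \<i> * phi m y + L) (arc +++ line)"
    using has_contour_integral_phi_kernel_arc[OF assms(1), folded arc_def] line_int
    by (rule has_contour_integral_join) (auto simp: arc_def line_def)
  then have "\<i> * phi m y + L = 0"
    using cauchy by (rule has_contour_integral_unique)
  then have "L = - (\<i> * phi m y)"
    by (simp add: add_eq_0_iff)
  then show ?thesis
    using line_int unfolding line_def
    by (subst (asm) has_contour_integral_linepath_Reals_iff) auto
qed

lemma phi_kernel_of_real:
  "phi_kernel m y (of_real t) = of_real (t ^ (2 * m - 1)) * cis (y * (t - 1 / t))"
  by (simp add: phi_kernel_def cis_conv_exp algebra_simps)

text \<open>The real part of the segment integral vanishes since its integrand is odd.\<close>
lemma Im_phi_eq_0: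
  assumes "m \<ge> 1" and "y \<ge> 0"
  shows "Im (phi m y) = 0"
proof -
  define g where "g t = t ^ (2 * m - 1) * cos (y * (t - 1 / t))" for t :: real
  have int: "(g has_integral Im (phi m y)) {-1..1}"
    using has_integral_Re[OF has_integral_phi_kernel_segment[OF assms]]
    by (simp add: phi_kernel_of_real g_def[abs_def])
  have "odd (2 * m - 1)"
    using assms by simp
  have "g (- t) = - g t" for t
  proof -
    have "(- t) ^ (2 * m - 1) = - (t ^ (2 * m - 1))"
      using \<open>odd (2 * m - 1)\<close> by simp
    moreover have "y * (- t - 1 / (- t)) = - (y * (t - 1 / t))"
      by (simp add: algebra_simps)
    ultimately show ?thesis
      by (simp add: g_def)
  qed
  then have "((\<lambda>t. - g t) has_integral Im (phi m y)) {-1..1}"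
    using has_integral_reflect_real[THEN iffD2, OF int] by simp
  then have "- Im (phi m y) = Im (phi m y)"
    using has_integral_neg[OF int] has_integral_unique by blast
  then show ?thesis by simp
qed

lemma phi_eq_phi_re:
  assumes "m \<ge> 1" and "y \<ge> 0"
  shows "phi m y = of_real (phi_re m y)"
  using Im_phi_eq_0[OF assms] by (simp add: complex_eq_iff phi_re_def)

lemma has_integral_phi_re_sin:
  assumes "m \<ge> 1" and "y \<ge> 0"
  shows "((\<lambda>t. t ^ (2 * m - 1) * sin (y * (t - 1 / t))) has_integral - phi_re m y) {-1..1}"
  using has_integral_Im[OF has_integral_phi_kernel_segment[OF assms]]
  by (simp add: phi_kernel_of_real phi_re_def)

definition phi_re_diff2 :: "nat \<Rightarrow> real \<Rightarrow> real" where
  "phi_re_diff2 k y = phi_re (k + 3) y + phi_re (k + 1) y - 2 * phi_re (k + 2) y"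

definition diff2_weight :: "nat \<Rightarrow> real \<Rightarrow> real" where
  "diff2_weight k t = t ^ (2 * k + 1) * (1 - t\<^sup>2)\<^sup>2"

lemma has_integral_phi_re_diff2:
  assumes "y \<ge> 0"
  shows "((\<lambda>t. diff2_weight k t * sin (y * (1 / t - t))) has_integral phi_re_diff2 k y) {-1..1}"
proof -
  let ?s = "\<lambda>t. sin (y * (t - 1 / t))"
  have int: "((\<lambda>t. t ^ (2 * k + 5) * ?s t + t ^ (2 * k + 1) * ?s t - 2 * (t ^ (2 * k + 3) * ?s t))
          has_integral (- phi_re (k + 3) y + - phi_re (k + 1) y - 2 * - phi_re (k + 2) y)) {-1..1}"
    using has_integral_phi_re_sin[OF _ assms, of "k + 3"] has_integral_phi_re_sin[OF _ assms, of "k + 1"]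
      has_integral_phi_re_sin[OF _ assms, of "k + 2"]
    by (intro has_integral_diff has_integral_add has_integral_mult_right)
       (simp_all add: numeral_eq_Suc)
  have eq: "t ^ (2 * k + 5) * ?s t + t ^ (2 * k + 1) * ?s t - 2 * (t ^ (2 * k + 3) * ?s t)
      = - (diff2_weight k t * sin (y * (1 / t - t)))" for t
  proof -
    have "sin (y * (1 / t - t)) = - ?s t"
      by (metis minus_diff_eq mult_minus_right sin_minus)
    then show ?thesis
      unfolding diff2_weight_def
      by (simp add: power_add power2_eq_square algebra_simps numeral_eq_Suc)
  qed
  have "- phi_re (k + 3) y + - phi_re (k + 1) y - 2 * - phi_re (k + 2) y = - phi_re_diff2 k y"
    by (simp add: phi_re_diff2_def)
  then have "((\<lambda>t. - (diff2_weight k t * sin (y * (1 / t - t)))) has_integral - phi_re_diff2 k y) {-1..1}"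
    using int unfolding eq by simp
  from has_integral_neg[OF this] show ?thesis
    by simp
qed

subsection \<open>Bounds on consecutive differences of phi\<close>

lemma abs_sin_of_nat_mult_le: "\<bar>sin (real k * x)\<bar> \<le> real k * \<bar>sin x\<bar>"
proof (induction k)
  case 0
  then show ?case by simp
next
  case (Suc k)
  have "sin (real (Suc k) * x) = sin (real k * x) * cos x + cos (real k * x) * sin x"
    by (simp add: distrib_right sin_add)
  then have "\<bar>sin (real (Suc k) * x)\<bar> \<le> \<bar>sin (real k * x)\<bar> * \<bar>cos x\<bar> + \<bar>cos (real k * x)\<bar> * \<bar>sin x\<bar>"
    by (simp add: abs_mult[symmetric] abs_triangle_ineq)
  also have "\<dots> \<le> \<bar>sin (real k * x)\<bar> + \<bar>sin x\<bar>"
    by (intro add_mono) (auto simp: mult_left_le mult_left_le_one_le)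
  finally show ?case
    using Suc by (simp add: algebra_simps)
qed

lemma has_integral_cos_even_multiple:
  assumes "k \<ge> 1"
  shows "((\<lambda>\<eta>. cos (2 * real k * \<eta>)) has_integral 0) {0..pi}"
proof -
  have "((\<lambda>\<eta>. cos (2 * real k * \<eta>)) has_integral
          (sin (2 * real k * pi) / (2 * real k) - sin (2 * real k * 0) / (2 * real k))) {0..pi}"
    using assms
    by (intro fundamental_theorem_of_calculus)
       (auto intro!: derivative_eq_intros simp flip: has_real_derivative_iff_has_vector_derivative)
  moreover have "sin (2 * real k * pi) = 0"
    using sin_npi[of "2 * k"] by simp
  ultimately show ?thesis by simp
qed

lemma power2_mult_exp_neg_le:
  fixes u :: real
  assumes "u \<ge> 0"
  shows "u\<^sup>2 * exp (- u) \<le> 4"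
proof -
  have "u / 2 \<le> exp (u / 2)"
    using exp_ge_add_one_self[of "u / 2"] by linarith
  then have "(u / 2)\<^sup>2 \<le> (exp (u / 2))\<^sup>2"
    using assms by (intro power_mono) auto
  also have "(exp (u / 2))\<^sup>2 = exp u"
    by (simp add: power2_eq_square flip: exp_add)
  finally have "u\<^sup>2 \<le> 4 * exp u"
    by (simp add: power_divide)
  then show ?thesis
    by (simp add: exp_minus field_simps)
qed

lemma has_integral_phi_re_diff:
  "((\<lambda>\<eta>. exp (- 2 * y * sin \<eta>) * (cos (2 * real m * \<eta>) - cos (2 * real (Suc m) * \<eta>)))
      has_integral (phi_re m y - phi_re (Suc m) y)) {0..pi}"
  using has_integral_diff[OF has_integral_phi_re[of y m] has_integral_phi_re[of y "Suc m"]]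
  by (simp add: algebra_simps)

text \<open>Subtracting \<open>\<integral> (cos (2 m \<eta>) - cos (2 (m + 1) \<eta>)) = 0\<close> replaces the weight by
  \<open>exp (-2 y sin \<eta>) - 1 = O(y)\<close>.\<close>
lemma abs_phi_re_diff_le_linear:
  assumes "m \<ge> 1" and "y \<ge> 0"
  shows "\<bar>phi_re m y - phi_re (Suc m) y\<bar> \<le> 4 * pi * y"
proof -
  let ?c = "\<lambda>\<eta>. cos (2 * real m * \<eta>) - cos (2 * real (Suc m) * \<eta>)"
  have cos_int: "(?c has_integral 0) {0..pi}"
    using has_integral_diff[OF has_integral_cos_even_multiple[of m] has_integral_cos_even_multiple[of "Suc m"]]
      assms by simp
  have int: "((\<lambda>\<eta>. (exp (- 2 * y * sin \<eta>) - 1) * ?c \<eta>)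
               has_integral (phi_re m y - phi_re (Suc m) y)) {0..pi}"
    using has_integral_diff[OF has_integral_phi_re_diff[of y m] cos_int] by (simp add: algebra_simps)
  have "norm (phi_re m y - phi_re (Suc m) y) \<le> (4 * y) * measure lborel {0..pi}"
  proof (rule has_integral_bound_real[OF _ _ int, where S = "{}"])
    fix \<eta> assume "\<eta> \<in> {0..pi} - {}"
    then have sin: "0 \<le> sin \<eta>" "sin \<eta> \<le> 1"
      by (auto intro: sin_ge_zero)
    have "\<bar>exp (- 2 * y * sin \<eta>) - 1\<bar> = 1 - exp (- (2 * y * sin \<eta>))"
      using sin assms by simp
    also have "\<dots> \<le> 2 * y * sin \<eta>"
      using exp_ge_add_one_self[of "- (2 * y * sin \<eta>)"] by linarith
    also have "\<dots> \<le> 2 * y"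
      using sin assms by (simp add: mult_left_le)
    finally have "\<bar>exp (- 2 * y * sin \<eta>) - 1\<bar> \<le> 2 * y" .
    moreover have "\<bar>?c \<eta>\<bar> \<le> 2"
      using abs_cos_le_one[of "2 * real m * \<eta>"] abs_cos_le_one[of "2 * real (Suc m) * \<eta>"] by linarith
    ultimately show "norm ((exp (- 2 * y * sin \<eta>) - 1) * ?c \<eta>) \<le> 4 * y"
      unfolding real_norm_def abs_mult using mult_mono[of _ "2 * y" _ 2] assms by simp
  qed (use assms in auto)
  then show ?thesis
    by (simp add: mult_ac)
qed

text \<open>Here \<open>cos (2 m \<eta>) - cos (2 (m + 1) \<eta>) = 2 sin ((2 m + 1) \<eta>) sin \<eta> = O(sin\<^sup>2 \<eta>)\<close>, and
  \<open>sin\<^sup>2 \<eta> exp (-2 y sin \<eta>) \<le> 1 / y\<^sup>2\<close>.\<close>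
lemma abs_phi_re_diff_le_inverse_square:
  assumes "y > 0"
  shows "\<bar>phi_re m y - phi_re (Suc m) y\<bar> \<le> 2 * pi * (2 * real m + 1) / y\<^sup>2"
proof -
  have "norm (phi_re m y - phi_re (Suc m) y) \<le> (2 * (2 * real m + 1) / y\<^sup>2) * measure lborel {0..pi}"
  proof (rule has_integral_bound_real[OF _ _ has_integral_phi_re_diff, where S = "{}"])
    fix \<eta> assume "\<eta> \<in> {0..pi} - {}"
    then have sin: "sin \<eta> \<ge> 0"
      by (auto intro: sin_ge_zero)
    have "(2 * real m * \<eta> + 2 * real (Suc m) * \<eta>) / 2 = real (2 * m + 1) * \<eta>"
      "(2 * real (Suc m) * \<eta> - 2 * real m * \<eta>) / 2 = \<eta>"
      by (simp_all add: field_simps)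
    then have "cos (2 * real m * \<eta>) - cos (2 * real (Suc m) * \<eta>) = 2 * sin (real (2 * m + 1) * \<eta>) * sin \<eta>"
      by (simp only: cos_diff_cos)
    then have "\<bar>cos (2 * real m * \<eta>) - cos (2 * real (Suc m) * \<eta>)\<bar>
        = 2 * \<bar>sin (real (2 * m + 1) * \<eta>)\<bar> * sin \<eta>"
      using sin by (simp add: abs_mult)
    also have "\<dots> \<le> 2 * (real (2 * m + 1) * sin \<eta>) * sin \<eta>"
      using abs_sin_of_nat_mult_le[of "2 * m + 1" \<eta>] sin by (intro mult_right_mono) auto
    finally have cos: "\<bar>cos (2 * real m * \<eta>) - cos (2 * real (Suc m) * \<eta>)\<bar>
        \<le> 2 * (2 * real m + 1) * (sin \<eta>)\<^sup>2"
      by (simp add: power2_eq_square algebra_simps)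
    have "(2 * y * sin \<eta>)\<^sup>2 * exp (- (2 * y * sin \<eta>)) \<le> 4"
      using sin assms by (intro power2_mult_exp_neg_le) simp
    then have exp: "(sin \<eta>)\<^sup>2 * exp (- 2 * y * sin \<eta>) \<le> 1 / y\<^sup>2"
      using assms by (simp add: power_mult_distrib field_simps)
    have "\<bar>exp (- 2 * y * sin \<eta>) * (cos (2 * real m * \<eta>) - cos (2 * real (Suc m) * \<eta>))\<bar>
        \<le> exp (- 2 * y * sin \<eta>) * (2 * (2 * real m + 1) * (sin \<eta>)\<^sup>2)"
      unfolding abs_mult abs_exp_cancel using cos by (intro mult_left_mono) auto
    also have "\<dots> = 2 * (2 * real m + 1) * ((sin \<eta>)\<^sup>2 * exp (- 2 * y * sin \<eta>))"
      by simp
    also have "\<dots> \<le> 2 * (2 * real m + 1) * (1 / y\<^sup>2)"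
      using exp by (intro mult_left_mono) auto
    finally show "norm (exp (- 2 * y * sin \<eta>) * (cos (2 * real m * \<eta>) - cos (2 * real (Suc m) * \<eta>)))
        \<le> 2 * (2 * real m + 1) / y\<^sup>2"
      by simp
  qed simp_all
  then show ?thesis
    by (simp add: field_simps)
qed

subsection \<open>Sine integrals against nonincreasing functions\<close>

lemma deriv_nonpos_if_convex_and_tendsto:
  fixes f' f'' :: "real \<Rightarrow> real"
  assumes f'_deriv: "\<And>x. x > 0 \<Longrightarrow> (f' has_real_derivative f'' x) (at x)"
    and f''_nonneg: "\<And>x. x > 0 \<Longrightarrow> f'' x \<ge> 0"
    and lim: "((\<lambda>x. x * f' x) \<longlongrightarrow> 0) at_top"
    and "x0 > 0"
  shows "f' x0 \<le> 0"
proof (rule ccontr)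
  assume "\<not> f' x0 \<le> 0"
  then have pos: "f' x0 > 0" by simp
  have "eventually (\<lambda>x. \<bar>x * f' x\<bar> < x0 * f' x0) at_top"
    using lim pos \<open>x0 > 0\<close> by (simp add: tendsto_iff dist_real_def)
  moreover have "eventually (\<lambda>x. x \<ge> x0) at_top"
    by (rule eventually_ge_at_top)
  ultimately obtain x where x: "\<bar>x * f' x\<bar> < x0 * f' x0" "x \<ge> x0"
    by (metis (mono_tags, lifting) eventually_at_top_linorder linorder_linear)
  have "f' x0 \<le> f' x"
    by (rule deriv_nonneg_imp_mono[of x0 x f' f'']) (use x \<open>x0 > 0\<close> f'_deriv f''_nonneg in auto)
  then have "x0 * f' x0 \<le> x * f' x"
    using x \<open>x0 > 0\<close> pos by (intro mult_mono) auto
  then show False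
    using x by linarith
qed

lemma one_minus_cos_le: "1 - cos (u :: real) \<le> u\<^sup>2 / 2"
proof -
  have "(sin (u / 2))\<^sup>2 \<le> (u / 2)\<^sup>2"
    using abs_sin_x_le_abs_x[of "u / 2"] by (metis abs_ge_zero power2_abs power_mono)
  then show ?thesis
    using cos_double_sin[of "u / 2"] by (simp add: power_divide)
qed

text \<open>Integrate by parts against \<open>1 - cos (\<omega> x) \<ge> 0\<close>: the term with \<open>f'\<close> is \<open>\<le> 0\<close>, the
  boundary term at \<open>R\<close> is \<open>\<ge> 0\<close> and the one at \<open>e\<close> is at most \<open>(\<omega> e)\<^sup>2 f e / 2\<close>.\<close>
lemma sin_integral_lower_bound:
  fixes f f' :: "real \<Rightarrow> real"
  assumes f_deriv: "\<And>x. x > 0 \<Longrightarrow> (f has_real_derivative f' x) (at x)"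
    and f_nonneg: "\<And>x. x > 0 \<Longrightarrow> f x \<ge> 0"
    and f'_nonpos: "\<And>x. x > 0 \<Longrightarrow> f' x \<le> 0"
    and "0 < e" "e \<le> R"
  shows "- ((\<omega> * e)\<^sup>2 / 2) * f e \<le> \<omega> * integral {e..R} (\<lambda>x. sin (\<omega> * x) * f x)"
proof -
  define F where "F x = (1 - cos (\<omega> * x)) * f x" for x
  have f_cont: "continuous_on {e..R} f"
    using \<open>0 < e\<close> by (intro continuous_at_imp_continuous_on ballI DERIV_isCont[OF f_deriv]) auto
  have "(F has_real_derivative (\<omega> * sin (\<omega> * x) * f x + (1 - cos (\<omega> * x)) * f' x))
          (at x within {e..R})" if "x \<in> {e..R}" for x
    unfolding F_def using that \<open>0 < e\<close>
    by (auto intro!: derivative_eq_intros has_field_derivative_at_within[OF f_deriv]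
             simp: algebra_simps)
  then have FTC: "((\<lambda>x. \<omega> * sin (\<omega> * x) * f x + (1 - cos (\<omega> * x)) * f' x) has_integral (F R - F e)) {e..R}"
    using \<open>e \<le> R\<close>
    by (intro fundamental_theorem_of_calculus) (auto simp flip: has_real_derivative_iff_has_vector_derivative)
  have sin_int: "((\<lambda>x. \<omega> * sin (\<omega> * x) * f x) has_integral \<omega> * integral {e..R} (\<lambda>x. sin (\<omega> * x) * f x)) {e..R}"
    using f_cont by (auto simp: mult.assoc intro!: has_integral_mult_right integrable_integral
                          integrable_continuous_interval continuous_intros)
  have "((\<lambda>x. (1 - cos (\<omega> * x)) * f' x)
          has_integral (F R - F e - \<omega> * integral {e..R} (\<lambda>x. sin (\<omega> * x) * f x))) {e..R}"
    using has_integral_diff[OF FTC sin_int] by simp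
  moreover have "(1 - cos (\<omega> * x)) * f' x \<le> 0" if "x \<in> {e..R}" for x
    using that \<open>0 < e\<close> f'_nonpos[of x] by (simp add: mult_nonneg_nonpos)
  ultimately have "F R - F e - \<omega> * integral {e..R} (\<lambda>x. sin (\<omega> * x) * f x) \<le> 0"
    using has_integral_le[OF _ has_integral_0] by blast
  moreover have "F R \<ge> 0"
    unfolding F_def using \<open>0 < e\<close> \<open>e \<le> R\<close> f_nonneg by simp
  moreover have "F e \<le> (\<omega> * e)\<^sup>2 / 2 * f e"
    unfolding F_def using one_minus_cos_le[of "\<omega> * e"] f_nonneg[of e] \<open>0 < e\<close>
    by (intro mult_right_mono) auto
  ultimately show ?thesis
    by linarith
qed

text \<open>The weight is \<open>c \<omega>\<close> with \<open>\<omega> = b (1/t - t)\<close> and \<open>c = t^(2k+2) (1 - t\<^sup>2) / b\<close>.\<close>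
lemma diff2_weight_factor:
  assumes "b > 0" and "t \<in> {-1..1}"
  obtains c where "c \<ge> 0" "diff2_weight k t = c * (b * (1 / t - t))" "c * (b * (1 / t - t))\<^sup>2 \<le> b"
proof
  define c where "c = t ^ (2 * k + 2) * (1 - t\<^sup>2) / b"
  have t2: "t\<^sup>2 \<le> 1"
    using assms(2) by (auto simp: abs_square_le_1)
  have even: "t ^ (2 * k + 2) = (t\<^sup>2) ^ (k + 1)" "t ^ (2 * k) = (t\<^sup>2) ^ k"
    by (simp only: power_mult[symmetric], simp add: algebra_simps) (simp add: power_mult)
  show "c \<ge> 0"
    unfolding c_def even using t2 assms(1) by simp
  show "diff2_weight k t = c * (b * (1 / t - t))"
  proof (cases "t = 0")
    case False
    then show ?thesis
      unfolding diff2_weight_def c_def using assms(1) by (simp add: field_simps power2_eq_square)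
  qed (simp add: diff2_weight_def c_def)
  show "c * (b * (1 / t - t))\<^sup>2 \<le> b"
  proof (cases "t = 0")
    case False
    then have "c * (b * (1 / t - t))\<^sup>2 = b * ((t\<^sup>2) ^ k * (1 - t\<^sup>2) ^ 3)"
      unfolding c_def even[symmetric] using assms(1)
      by (simp add: field_simps power2_eq_square power3_eq_cube)
    also have "\<dots> \<le> b"
      using t2 assms(1) by (simp add: mult_left_le mult_le_one power_le_one)
    finally show ?thesis .
  qed (use assms in \<open>simp add: c_def\<close>)
qed

lemma continuous_on_diff2_weight_sin:
  "continuous_on UNIV (\<lambda>p :: real \<times> real. diff2_weight k (snd p) * sin (b * fst p * (1 / snd p - snd p)))"
proof (clarsimp simp: continuous_on_eq_continuous_within)
  fix x t :: real
  show "continuous (at (x, t)) (\<lambda>p. diff2_weight k (snd p) * sin (b * fst p * (1 / snd p - snd p)))"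
  proof (cases "t = 0")
    case False
    then show ?thesis
      unfolding diff2_weight_def by (intro continuous_intros) auto
  next
    case True
    have "((\<lambda>p :: real \<times> real. \<bar>diff2_weight k (snd p)\<bar>) \<longlongrightarrow> \<bar>diff2_weight k (snd (x, t))\<bar>) (at (x, t))"
      unfolding diff2_weight_def by (intro tendsto_intros)
    then have "((\<lambda>p :: real \<times> real. \<bar>diff2_weight k (snd p)\<bar>) \<longlongrightarrow> 0) (at (x, t))"
      using True by (simp add: diff2_weight_def)
    then have "((\<lambda>p. diff2_weight k (snd p) * sin (b * fst p * (1 / snd p - snd p))) \<longlongrightarrow> 0) (at (x, t))"
      by (rule Lim_null_comparison[rotated])
         (auto intro!: always_eventually simp: abs_mult mult_left_le)
    then show ?thesis
      using True by (simp add: continuous_at diff2_weight_def)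
  qed
qed

lemma diff2_weight_mult_sin_integral_lower_bound:
  fixes f f' :: "real \<Rightarrow> real"
  assumes "b > 0"
    and f_deriv: "\<And>x. x > 0 \<Longrightarrow> (f has_real_derivative f' x) (at x)"
    and f_nonneg: "\<And>x. x > 0 \<Longrightarrow> f x \<ge> 0"
    and f'_nonpos: "\<And>x. x > 0 \<Longrightarrow> f' x \<le> 0"
    and "0 < e" "e \<le> R" and "t \<in> {-1..1}"
  shows "- (b * e\<^sup>2 / 2 * f e)
      \<le> diff2_weight k t * integral {e..R} (\<lambda>x. sin (b * (1 / t - t) * x) * f x)"
proof -
  let ?\<omega> = "b * (1 / t - t)"
  obtain c where c: "c \<ge> 0" "diff2_weight k t = c * ?\<omega>" "c * ?\<omega>\<^sup>2 \<le> b"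
    using diff2_weight_factor[OF \<open>b > 0\<close> \<open>t \<in> {-1..1}\<close>] by blast
  have rescale: "c * (- ((w * e)\<^sup>2 / 2) * f e) = - ((c * w\<^sup>2) * (e\<^sup>2 / 2 * f e))" for w
    by (simp add: power_mult_distrib algebra_simps)
  have "- (b * (e\<^sup>2 / 2 * f e)) \<le> - ((c * ?\<omega>\<^sup>2) * (e\<^sup>2 / 2 * f e))"
    using c(3) f_nonneg[OF \<open>0 < e\<close>] by (simp add: mult_right_mono)
  also have "\<dots> = c * (- ((?\<omega> * e)\<^sup>2 / 2) * f e)"
    by (rule rescale[symmetric])
  also have "\<dots> \<le> c * (?\<omega> * integral {e..R} (\<lambda>x. sin (?\<omega> * x) * f x))"
    by (intro mult_left_mono sin_integral_lower_bound[OF f_deriv f_nonneg f'_nonpos \<open>0 < e\<close> \<open>e \<le> R\<close>] c)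
  also have "\<dots> = diff2_weight k t * integral {e..R} (\<lambda>x. sin (?\<omega> * x) * f x)"
    by (simp add: c(2))
  finally show ?thesis
    by simp
qed

lemma continuous_on_diff2_kernel:
  assumes "continuous_on S f"
  shows "continuous_on (S \<times> T) (\<lambda>(x, t). diff2_weight k t * sin (b * x * (1 / t - t)) * f x)"
    and "continuous_on (T \<times> S) (\<lambda>(t, x). diff2_weight k t * sin (b * x * (1 / t - t)) * f x)"
proof -
  show cont: "continuous_on (S \<times> T) (\<lambda>(x, t). diff2_weight k t * sin (b * x * (1 / t - t)) * f x)"
    unfolding case_prod_beta
    by (intro continuous_on_mult continuous_on_subset[OF continuous_on_diff2_weight_sin]
          continuous_on_compose2[OF assms continuous_on_fst]) auto
  have "continuous_on (T \<times> S) ((\<lambda>(x, t). diff2_weight k t * sin (b * x * (1 / t - t)) * f x) \<circ> prod.swap)"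
    by (intro continuous_on_compose continuous_on_swap continuous_on_subset[OF cont]) auto
  then show "continuous_on (T \<times> S) (\<lambda>(t, x). diff2_weight k t * sin (b * x * (1 / t - t)) * f x)"
    by (simp add: o_def case_prod_beta)
qed

text \<open>Fubini on \<open>[e, R] \<times> [-1, 1]\<close> reduces this to a sine integral for each fixed \<open>t\<close>.\<close>
lemma truncated_diff2_integral_lower_bound:
  fixes f f' :: "real \<Rightarrow> real"
  assumes "b > 0"
    and f_deriv: "\<And>x. x > 0 \<Longrightarrow> (f has_real_derivative f' x) (at x)"
    and f_nonneg: "\<And>x. x > 0 \<Longrightarrow> f x \<ge> 0"
    and f'_nonpos: "\<And>x. x > 0 \<Longrightarrow> f' x \<le> 0"
    and "0 < e" "e \<le> R"
  shows "- (b * e\<^sup>2 * f e) \<le> integral {e..R} (\<lambda>x. phi_re_diff2 k (b * x) * f x)"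
proof -
  define K where "K x t = diff2_weight k t * sin (b * x * (1 / t - t)) * f x" for x t
  have f_cont: "continuous_on {e..R} f"
    using \<open>0 < e\<close> by (intro continuous_at_imp_continuous_on ballI DERIV_isCont[OF f_deriv]) auto
  have K_cont: "continuous_on ({e..R} \<times> {-1..1}) (\<lambda>(x, t). K x t)"
    and K_cont': "continuous_on ({-1..1} \<times> {e..R}) (\<lambda>(t, x). K x t)"
    unfolding K_def by (fact continuous_on_diff2_kernel[OF f_cont])+
  have "integral {e..R} (\<lambda>x. phi_re_diff2 k (b * x) * f x) = integral {e..R} (\<lambda>x. integral {-1..1} (K x))"
  proof (rule integral_cong)
    fix x assume "x \<in> {e..R}"
    then have "b * x \<ge> 0"
      using \<open>b > 0\<close> \<open>0 < e\<close> by simp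
    from integral_unique[OF has_integral_phi_re_diff2[OF this, of k]]
    show "phi_re_diff2 k (b * x) * f x = integral {-1..1} (K x)"
      by (simp add: K_def[abs_def])
  qed
  also have "\<dots> = integral {-1..1} (\<lambda>t. integral {e..R} (\<lambda>x. K x t))"
    using integral_swap_continuous[of e "-1" R 1 "\<lambda>x t. K x t", unfolded cbox_Pair_eq] K_cont
    by (simp add: cbox_interval)
  also have "\<dots> \<ge> integral {-1..1} (\<lambda>t::real. - (b * e\<^sup>2 / 2 * f e))"
  proof (intro integral_le ballI)
    show "(\<lambda>t. integral {e..R} (\<lambda>x. K x t)) integrable_on {-1..1}"
      using integral_continuous_on_param[where f = "\<lambda>t x. K x t" and a = e and b = R] K_cont'
      by (auto simp: cbox_interval intro: integrable_continuous_interval)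
    fix t :: real assume "t \<in> {-1..1}"
    have "K x t = diff2_weight k t * (sin (b * (1 / t - t) * x) * f x)" for x
      by (simp add: K_def mult_ac)
    then show "- (b * e\<^sup>2 / 2 * f e) \<le> integral {e..R} (\<lambda>x. K x t)"
      using diff2_weight_mult_sin_integral_lower_bound[OF \<open>b > 0\<close> f_deriv f_nonneg f'_nonpos
          \<open>0 < e\<close> \<open>e \<le> R\<close> \<open>t \<in> {-1..1}\<close>]
      by simp
  qed (simp_all add: integrable_on_const)
  finally show ?thesis
    by simp
qed

subsection \<open>Integrals over the positive half-line\<close>

lemma integral_complex_of_real_eq:
  fixes g :: "real \<Rightarrow> real"
  shows "integral S (\<lambda>x. complex_of_real (g x)) = of_real (integral S g)"
proof (cases "g integrable_on S")
  case True
  then show ?thesis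
    by (intro integral_unique has_integral_of_real integrable_integral)
next
  case False
  have "\<not> (\<lambda>x. complex_of_real (g x)) integrable_on S"
  proof
    assume "(\<lambda>x. complex_of_real (g x)) integrable_on S"
    then obtain I where "((\<lambda>x. complex_of_real (g x)) has_integral I) S"
      by (auto simp: integrable_on_def)
    from has_integral_Re[OF this] have "g integrable_on S"
      by (auto simp: integrable_on_def)
    with False show False ..
  qed
  then show ?thesis
    using False by (simp add: not_integrable_integral)
qed

lemma integrable_on_inverse_square_shifted: "(\<lambda>x::real. 1 / (1 + x)\<^sup>2) integrable_on {0<..}"
proof -
  have "((\<lambda>x::real. 1 / (1 + x)\<^sup>2) has_integral 1) {0..}"
  proof (rule has_integral_to_inf)
    show "(\<lambda>x. 1 / (1 + x)\<^sup>2) integrable_on {0..y}" for y :: real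
      by (intro integrable_continuous_interval continuous_intros) auto
    have "((\<lambda>x::real. 1 / (1 + x)\<^sup>2) has_integral ((- 1 / (1 + y)) - (- 1 / (1 + 0)))) {0..y}"
      if "y \<ge> 0" for y :: real
    proof (rule fundamental_theorem_of_calculus[OF that])
      fix x assume "x \<in> {0..y}"
      then have "((\<lambda>x. - 1 / (1 + x)) has_real_derivative 1 / (1 + x)\<^sup>2) (at x within {0..y})"
        by (auto intro!: derivative_eq_intros simp: power2_eq_square field_simps)
      then show "((\<lambda>x. - 1 / (1 + x)) has_vector_derivative 1 / (1 + x)\<^sup>2) (at x within {0..y})"
        by (simp add: has_real_derivative_iff_has_vector_derivative)
    qed
    then have "\<forall>\<^sub>F y in at_top. integral {0..y} (\<lambda>x::real. 1 / (1 + x)\<^sup>2) = 1 - 1 / (1 + y)"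
      by (intro eventually_at_top_linorderI[of 0]) (auto simp: integral_unique)
    moreover have "((\<lambda>y::real. 1 - 1 / (1 + y)) \<longlongrightarrow> 1) at_top"
      by real_asymp
    ultimately show "((\<lambda>y. integral {0..y} (\<lambda>x::real. 1 / (1 + x)\<^sup>2)) \<longlongrightarrow> 1) at_top"
      by (simp add: tendsto_cong)
  qed simp
  then have "(\<lambda>x::real. 1 / (1 + x)\<^sup>2) integrable_on {0..}"
    by (auto simp: integrable_on_def)
  then show ?thesis
    by (rule integrable_spike_set) (auto intro: negligible_subset[OF negligible_sing[of 0]])
qed

lemma abs_kernel_mult_le_near_0:
  fixes d f :: "real \<Rightarrow> real"
  assumes "b > 0" and d_lin: "\<And>y. 0 < y \<Longrightarrow> \<bar>d y\<bar> \<le> A * y"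
    and f_nonneg: "\<And>x. 0 < x \<Longrightarrow> 0 \<le> f x"
    and f_near_0: "\<And>x. 0 < x \<Longrightarrow> x < \<delta> \<Longrightarrow> x * f x \<le> K"
    and "0 < x" "x < \<delta>"
  shows "\<bar>d (b * x) * f x\<bar> \<le> A * b * K * (1 + \<delta>)\<^sup>2 / (1 + x)\<^sup>2"
proof -
  have "A \<ge> 0"
    using d_lin[of 1] by simp
  have "\<bar>d (b * x) * f x\<bar> \<le> (A * (b * x)) * f x"
    using d_lin[of "b * x"] \<open>b > 0\<close> \<open>0 < x\<close> f_nonneg[of x]
    by (simp add: abs_mult mult_right_mono)
  also have "\<dots> = A * b * (x * f x)"
    by (simp add: mult_ac)
  also have "\<dots> \<le> A * b * K"
    using f_near_0[OF \<open>0 < x\<close> \<open>x < \<delta>\<close>] \<open>A \<ge> 0\<close> \<open>b > 0\<close> by (simp add: mult_left_mono)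
  finally have bound: "\<bar>d (b * x) * f x\<bar> \<le> A * b * K" .
  have "0 \<le> A * b * K"
    using bound by (rule order_trans[OF abs_ge_zero])
  moreover have "1 \<le> (1 + \<delta>)\<^sup>2 / (1 + x)\<^sup>2"
    using \<open>0 < x\<close> \<open>x < \<delta>\<close> power_mono[of "1 + x" "1 + \<delta>" 2] by simp
  ultimately have "A * b * K \<le> A * b * K * ((1 + \<delta>)\<^sup>2 / (1 + x)\<^sup>2)"
    using mult_left_mono by (metis mult_1_right)
  with bound show ?thesis
    by simp
qed

lemma abs_kernel_mult_le_far_from_0:
  fixes d f :: "real \<Rightarrow> real"
  assumes "b > 0" and d_sq: "\<And>y. 0 < y \<Longrightarrow> \<bar>d y\<bar> \<le> B / y\<^sup>2"
    and f_nonneg: "\<And>x. 0 < x \<Longrightarrow> 0 \<le> f x"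
    and f_antimono: "\<And>x. \<delta> \<le> x \<Longrightarrow> f x \<le> f \<delta>"
    and "0 < \<delta>" "\<delta> \<le> x"
  shows "\<bar>d (b * x) * f x\<bar> \<le> B * f \<delta> * (1 + 1 / \<delta>)\<^sup>2 / b\<^sup>2 / (1 + x)\<^sup>2"
proof -
  have "B \<ge> 0"
    using d_sq[of 1] by simp
  have "0 < x"
    using assms by simp
  have "\<bar>d (b * x) * f x\<bar> = \<bar>d (b * x)\<bar> * f x"
    using f_nonneg[OF \<open>0 < x\<close>] by (simp add: abs_mult)
  also have "\<dots> \<le> (B / (b * x)\<^sup>2) * f \<delta>"
    using d_sq[of "b * x"] \<open>b > 0\<close> \<open>0 < x\<close> f_nonneg[of x] f_antimono[OF \<open>\<delta> \<le> x\<close>] \<open>B \<ge> 0\<close>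
    by (intro mult_mono) auto
  also have "\<dots> = B * f \<delta> / b\<^sup>2 * (1 / x\<^sup>2)"
    by (simp add: power_mult_distrib)
  also have "\<dots> \<le> B * f \<delta> / b\<^sup>2 * ((1 + 1 / \<delta>)\<^sup>2 / (1 + x)\<^sup>2)"
  proof (rule mult_left_mono)
    have "1 + x \<le> x * (1 + 1 / \<delta>)"
      using \<open>\<delta> \<le> x\<close> \<open>0 < \<delta>\<close> by (simp add: field_simps)
    then have "(1 + x)\<^sup>2 \<le> x\<^sup>2 * (1 + 1 / \<delta>)\<^sup>2"
      using \<open>0 < x\<close> by (simp add: power_mult_distrib[symmetric] power_mono)
    then show "1 / x\<^sup>2 \<le> (1 + 1 / \<delta>)\<^sup>2 / (1 + x)\<^sup>2"
      using \<open>0 < x\<close> \<open>0 < \<delta>\<close> by (simp add: field_simps)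
  qed (use \<open>B \<ge> 0\<close> f_nonneg[of \<delta>] \<open>0 < \<delta>\<close> in simp)
  finally show ?thesis
    by simp
qed

lemma absolutely_integrable_on_Ioi_kernel_mult:
  fixes d f :: "real \<Rightarrow> real"
  assumes d_cont: "continuous_on {0<..} d" and f_cont: "continuous_on {0<..} f" and "b > 0"
    and d_lin: "\<And>y. 0 < y \<Longrightarrow> \<bar>d y\<bar> \<le> A * y"
    and d_sq: "\<And>y. 0 < y \<Longrightarrow> \<bar>d y\<bar> \<le> B / y\<^sup>2"
    and f_nonneg: "\<And>x. 0 < x \<Longrightarrow> 0 \<le> f x"
    and "0 < \<delta>" and f_near_0: "\<And>x. 0 < x \<Longrightarrow> x < \<delta> \<Longrightarrow> x * f x \<le> K"
    and f_antimono: "\<And>x. \<delta> \<le> x \<Longrightarrow> f x \<le> f \<delta>"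
  shows "(\<lambda>x. d (b * x) * f x) absolutely_integrable_on {0<..}"
proof (rule measurable_bounded_by_integrable_imp_absolutely_integrable)
  show Ioi: "({0<..} :: real set) \<in> sets lebesgue"
    by (rule lebesgue_openin) auto
  show "(\<lambda>x. d (b * x) * f x) \<in> borel_measurable (lebesgue_on {0<..})"
    using \<open>b > 0\<close>
    by (intro continuous_imp_measurable_on_sets_lebesgue continuous_on_mult f_cont Ioi
          continuous_on_compose2[OF d_cont] continuous_intros) auto
  define M where "M = max (A * b * K * (1 + \<delta>)\<^sup>2) (B * f \<delta> * (1 + 1 / \<delta>)\<^sup>2 / b\<^sup>2)"
  show "(\<lambda>x. M * (1 / (1 + x)\<^sup>2)) integrable_on {0<..}"
    using integrable_on_cmult_left[OF integrable_on_inverse_square_shifted, of M] by simp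
  fix x :: real assume "x \<in> {0<..}"
  then have "0 < x" by simp
  show "norm (d (b * x) * f x) \<le> M * (1 / (1 + x)\<^sup>2)"
  proof (cases "x < \<delta>")
    case True
    have "norm (d (b * x) * f x) \<le> A * b * K * (1 + \<delta>)\<^sup>2 / (1 + x)\<^sup>2"
      using abs_kernel_mult_le_near_0[OF \<open>b > 0\<close> d_lin f_nonneg f_near_0 \<open>0 < x\<close> True] by simp
    also have "\<dots> \<le> M / (1 + x)\<^sup>2"
      by (intro divide_right_mono) (simp_all add: M_def)
    finally show ?thesis
      by simp
  next
    case False
    have "norm (d (b * x) * f x) \<le> B * f \<delta> * (1 + 1 / \<delta>)\<^sup>2 / b\<^sup>2 / (1 + x)\<^sup>2"
      using abs_kernel_mult_le_far_from_0[where d = d and f = f and x = x,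
          OF \<open>b > 0\<close> d_sq f_nonneg f_antimono \<open>0 < \<delta>\<close>] False by simp
    also have "\<dots> \<le> M / (1 + x)\<^sup>2"
      by (intro divide_right_mono) (simp_all add: M_def)
    finally show ?thesis
      by simp
  qed
qed

lemma tendsto_integral_truncations:
  fixes H :: "real \<Rightarrow> real"
  assumes "H absolutely_integrable_on {0<..}"
  shows "(\<lambda>j. integral {1 / Suc j..Suc j} H) \<longlonglongrightarrow> integral {0<..} H"
proof -
  define H' where "H' j x = (if x \<in> {1 / Suc j..Suc j} then H x else 0)" for j x
  have sub: "{1 / Suc j..real (Suc j)} \<subseteq> {0<..}" for j
    by (auto intro: order_less_le_trans[of 0 "1 / real (Suc j)"])
  have H_int: "H integrable_on {0<..}" and norm_int: "(\<lambda>x. norm (H x)) integrable_on {0<..}"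
    using assms by (simp_all add: absolutely_integrable_on_def)
  have "(\<lambda>j. integral {0<..} (H' j)) \<longlonglongrightarrow> integral {0<..} H"
  proof (rule dominated_convergence(2)[OF _ norm_int])
    show "H' j integrable_on {0<..}" for j
      unfolding H'_def integrable_restrict_Int using sub[of j]
      by (simp add: Int_absorb2 integrable_on_subinterval[OF H_int])
    show "norm (H' j x) \<le> norm (H x)" for j x
      by (simp add: H'_def)
    fix x :: real assume "x \<in> {0<..}"
    then obtain N :: nat where N: "max x (1 / x) < real N"
      using reals_Archimedean2 by blast
    have "H' j x = H x" if "j \<ge> N" for j
    proof -
      have "real N \<le> real j"
        using that by simp
      then have "x \<le> real (Suc j)" and "1 / x < real (Suc j)"
        using N by auto
      then have "1 / real (Suc j) \<le> x"
        using \<open>x \<in> {0<..}\<close> by (simp add: field_simps)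
      with \<open>x \<le> real (Suc j)\<close> show ?thesis
        by (simp add: H'_def)
    qed
    then show "(\<lambda>j. H' j x) \<longlonglongrightarrow> H x"
      by (intro tendsto_eventually eventually_sequentiallyI)
  qed
  moreover have "integral {0<..} (H' j) = integral {1 / Suc j..Suc j} H" for j
    unfolding H'_def integral_restrict_Int using sub[of j] by (simp add: Int_absorb2)
  ultimately show ?thesis
    by simp
qed

lemma integral_Ioi_nonneg_if_truncations_bounded_below:
  fixes H :: "real \<Rightarrow> real"
  assumes "H absolutely_integrable_on {0<..}" and "0 < \<delta>"
    and lower: "\<And>e R. 0 < e \<Longrightarrow> e < \<delta> \<Longrightarrow> e \<le> R \<Longrightarrow> - (c * e) \<le> integral {e..R} H"
  shows "0 \<le> integral {0<..} H"
proof (rule tendsto_le[OF trivial_limit_sequentially tendsto_integral_truncations[OF assms(1)]])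
  have inverse_Suc: "(\<lambda>j. 1 / real (Suc j)) \<longlonglongrightarrow> 0"
    using LIMSEQ_inverse_real_of_nat by (simp add: inverse_eq_divide)
  show "(\<lambda>j. - (c * (1 / real (Suc j)))) \<longlonglongrightarrow> 0"
    using tendsto_minus[OF tendsto_mult[OF tendsto_const inverse_Suc, of c]] by simp
  have "eventually (\<lambda>j. 1 / real (Suc j) < \<delta>) sequentially"
    using inverse_Suc \<open>0 < \<delta>\<close> by (intro order_tendstoD(2)) auto
  then show "eventually (\<lambda>j. - (c * (1 / real (Suc j))) \<le> integral {1 / real (Suc j)..real (Suc j)} H) sequentially"
  proof eventually_elim
    case (elim j)
    have "1 / real (Suc j) \<le> 1"
      by simp
    also have "\<dots> \<le> real (Suc j)"
      by simp
    finally show ?case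
      using elim by (intro lower) auto
  qed
qed

text \<open>If the middle function is not integrable then neither are the outer ones, and all three
  Henstock--Kurzweil integrals take the junk value \<open>0\<close>.\<close>
lemma integral_second_difference_nonneg:
  fixes g1 g2 g3 :: "real \<Rightarrow> real"
  assumes "(\<lambda>x. g1 x - g2 x) integrable_on S" and "(\<lambda>x. g2 x - g3 x) integrable_on S"
    and "0 \<le> integral S (\<lambda>x. (g1 x - g2 x) - (g2 x - g3 x))"
  shows "0 \<le> integral S g1 + integral S g3 - 2 * integral S g2"
proof (cases "g2 integrable_on S")
  case True
  have g1: "g1 integrable_on S"
    using integrable_add[OF assms(1) True] by simp
  have g3: "g3 integrable_on S"
    using integrable_diff[OF True assms(2)] by simp
  from assms(3) show ?thesis
    unfolding integral_diff[OF assms(1,2)] integral_diff[OF g1 True] integral_diff[OF True g3]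
    by linarith
next
  case False
  have "\<not> g1 integrable_on S"
  proof
    assume "g1 integrable_on S"
    from integrable_diff[OF this assms(1)] have "g2 integrable_on S"
      by simp
    with False show False ..
  qed
  moreover have "\<not> g3 integrable_on S"
  proof
    assume "g3 integrable_on S"
    from integrable_add[OF assms(2) this] have "g2 integrable_on S"
      by simp
    with False show False ..
  qed
  ultimately show ?thesis
    using False by (simp add: not_integrable_integral)
qed

lemma lam_eq_integral_phi_re:
  assumes "b > 0" and "m \<ge> 1"
  shows "lam f m b = 2 * of_real (integral {0<..} (\<lambda>x. phi_re m (b * x) * f x))"
proof -
  have "integral {0<..} (\<lambda>x. phi m (b * x) * of_real (f x))
      = integral {0<..} (\<lambda>x. of_real (phi_re m (b * x) * f x))"
    using phi_eq_phi_re[OF assms(2)] assms(1) by (intro integral_cong) simp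
  then show ?thesis
    unfolding lam_def integral_complex_of_real_eq by simp
qed

lemma absolutely_integrable_phi_re_diff_mult:
  fixes f :: "real \<Rightarrow> real"
  assumes "b > 0" and "m \<ge> 1" and f_cont: "continuous_on {0<..} f"
    and f_nonneg: "\<And>x. 0 < x \<Longrightarrow> 0 \<le> f x"
    and "0 < \<delta>" and f_near_0: "\<And>x. 0 < x \<Longrightarrow> x < \<delta> \<Longrightarrow> x * f x \<le> K"
    and f_antimono: "\<And>x. \<delta> \<le> x \<Longrightarrow> f x \<le> f \<delta>"
  shows "(\<lambda>x. phi_re m (b * x) * f x - phi_re (Suc m) (b * x) * f x) absolutely_integrable_on {0<..}"
proof -
  have "(\<lambda>x. (phi_re m (b * x) - phi_re (Suc m) (b * x)) * f x) absolutely_integrable_on {0<..}"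
  proof (rule absolutely_integrable_on_Ioi_kernel_mult[OF _ f_cont \<open>b > 0\<close> _ _ f_nonneg \<open>0 < \<delta>\<close> f_near_0 f_antimono])
    show "continuous_on {0<..} (\<lambda>y. phi_re m y - phi_re (Suc m) y)"
      by (intro continuous_on_diff continuous_on_subset[OF continuous_on_phi_re]) auto
    show "\<bar>phi_re m y - phi_re (Suc m) y\<bar> \<le> 4 * pi * y" if "0 < y" for y
      using abs_phi_re_diff_le_linear[OF \<open>m \<ge> 1\<close>] that by simp
    show "\<bar>phi_re m y - phi_re (Suc m) y\<bar> \<le> 2 * pi * (2 * real m + 1) / y\<^sup>2" if "0 < y" for y
      using abs_phi_re_diff_le_inverse_square[OF that] .
  qed
  then show ?thesis
    unfolding left_diff_distrib .
qed

lemma integral_phi_re_second_difference_nonneg: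
  fixes f f' :: "real \<Rightarrow> real"
  assumes b_pos: "b > 0"
    and f_deriv: "\<And>x. x > 0 \<Longrightarrow> (f has_real_derivative f' x) (at x)"
    and f_nonneg: "\<And>x. x > 0 \<Longrightarrow> f x \<ge> 0"
    and f'_nonpos: "\<And>x. x > 0 \<Longrightarrow> f' x \<le> 0"
    and "0 < \<delta>" and f_near_0: "\<And>x. 0 < x \<Longrightarrow> x < \<delta> \<Longrightarrow> x * f x \<le> K"
  shows "0 \<le> integral {0<..} (\<lambda>x. phi_re (k + 1) (b * x) * f x)
            + integral {0<..} (\<lambda>x. phi_re (k + 3) (b * x) * f x)
            - 2 * integral {0<..} (\<lambda>x. phi_re (k + 2) (b * x) * f x)"
proof -
  have f_cont: "continuous_on {0<..} f"
    by (intro continuous_at_imp_continuous_on ballI DERIV_isCont[OF f_deriv]) auto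
  have f_antimono: "f x \<le> f \<delta>" if "\<delta> \<le> x" for x
    using that \<open>0 < \<delta>\<close> f_deriv f'_nonpos by (intro deriv_nonpos_imp_antimono[of \<delta> x f f']) auto
  define G where "G m x = phi_re m (b * x) * f x" for m x
  have G_diff: "(\<lambda>x. G m x - G (Suc m) x) absolutely_integrable_on {0<..}" if "m \<ge> 1" for m
    unfolding G_def using \<open>0 < \<delta>\<close> f_antimono f_nonneg f_near_0
    by (intro absolutely_integrable_phi_re_diff_mult[OF b_pos that f_cont]) auto
  have H_eq: "(\<lambda>x. phi_re_diff2 k (b * x) * f x)
      = (\<lambda>x. (G (Suc k) x - G (Suc (Suc k)) x) - (G (Suc (Suc k)) x - G (Suc (Suc (Suc k))) x))"
    by (simp add: fun_eq_iff G_def phi_re_diff2_def algebra_simps numeral_eq_Suc)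
  have H_int: "(\<lambda>x. phi_re_diff2 k (b * x) * f x) absolutely_integrable_on {0<..}"
    unfolding H_eq by (rule set_integral_diff(1)[OF G_diff G_diff]) simp_all
  have H_lower: "- (b * K * e) \<le> integral {e..R} (\<lambda>x. phi_re_diff2 k (b * x) * f x)"
    if "0 < e" "e < \<delta>" "e \<le> R" for e R
  proof -
    have "b * e\<^sup>2 * f e \<le> b * K * e"
      using mult_left_mono[OF f_near_0[OF that(1,2)], of "b * e"] b_pos that(1)
      by (simp add: power2_eq_square mult_ac)
    moreover have "- (b * e\<^sup>2 * f e) \<le> integral {e..R} (\<lambda>x. phi_re_diff2 k (b * x) * f x)"
      using that by (intro truncated_diff2_integral_lower_bound[OF b_pos f_deriv f_nonneg f'_nonpos]) auto
    ultimately show ?thesis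
      by linarith
  qed
  have "0 \<le> integral {0<..} (\<lambda>x. phi_re_diff2 k (b * x) * f x)"
    using integral_Ioi_nonneg_if_truncations_bounded_below[OF H_int \<open>0 < \<delta>\<close> H_lower] .
  then have "0 \<le> integral {0<..} (G (Suc k)) + integral {0<..} (G (Suc (Suc (Suc k))))
      - 2 * integral {0<..} (G (Suc (Suc k)))"
    unfolding H_eq
    by (rule integral_second_difference_nonneg[rotated 2])
       (simp_all add: set_lebesgue_integral_eq_integral(1)[OF G_diff])
  then show ?thesis
    by (simp add: G_def[abs_def] numeral_eq_Suc)
qed

lemma bound_near_0_if_Limsup_le:
  fixes f f' :: "real \<Rightarrow> real"
  assumes "Limsup (at_right 0) (\<lambda>x. ereal (x * \<bar>f x\<bar>))
              + Limsup (at_right 0) (\<lambda>x. ereal (x\<^sup>2 * \<bar>f' x\<bar>)) \<le> ereal C"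
  obtains \<delta> where "0 < \<delta>" "\<And>x. 0 < x \<Longrightarrow> x < \<delta> \<Longrightarrow> x * \<bar>f x\<bar> \<le> C + 1"
proof -
  have "0 \<le> Limsup (at_right (0::real)) (\<lambda>x. ereal (x\<^sup>2 * \<bar>f' x\<bar>))"
    by (intro le_Limsup always_eventually allI) auto
  from add_increasing2[OF this order_refl] have "Limsup (at_right (0::real)) (\<lambda>x. ereal (x * \<bar>f x\<bar>)) \<le> ereal C"
    using assms by (rule order_trans)
  then have "Limsup (at_right (0::real)) (\<lambda>x. ereal (x * \<bar>f x\<bar>)) < ereal (C + 1)"
    by (rule order_le_less_trans) simp
  from Limsup_lessD[OF this] show ?thesis
    unfolding eventually_at_right_field by (auto intro!: that less_imp_le)
qed

theorem lemma3p8: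
  fixes f f' f'' :: "real \<Rightarrow> real" and b C :: real and n :: nat
  assumes b_pos: "b > 0"
    and f_deriv: "\<And>x. x > 0 \<Longrightarrow> (f has_real_derivative f' x) (at x)"
    and f'_deriv: "\<And>x. x > 0 \<Longrightarrow> (f' has_real_derivative f'' x) (at x)"
    and f''_cont: "continuous_on {0<..} f''"
    and f_nonneg: "\<And>x. x > 0 \<Longrightarrow> f x \<ge> 0"
    and C_pos: "C > 0"
    and cond1: "Limsup (at_right 0) (\<lambda>x. ereal (x * \<bar>f x\<bar>))
              + Limsup (at_right 0) (\<lambda>x. ereal (x\<^sup>2 * \<bar>f' x\<bar>)) \<le> ereal C"
    and cond2a: "(f \<longlongrightarrow> 0) at_top"
    and cond2b: "((\<lambda>x. x * f' x) \<longlongrightarrow> 0) at_top"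
    and cond3: "\<And>x. x > 0 \<Longrightarrow> f'' x \<ge> 0"
    and n_ge: "n \<ge> 2"
  shows "Im (lam f (n + 1) b + lam f (n - 1) b - 2 * lam f n b) = 0
       \<and> Re (lam f (n + 1) b + lam f (n - 1) b - 2 * lam f n b) \<ge> 0"
proof -
  define k where "k = n - 2"
  have n: "n = k + 2"
    using n_ge by (simp add: k_def)
  have f'_nonpos: "f' x \<le> 0" if "x > 0" for x
    using deriv_nonpos_if_convex_and_tendsto[OF f'_deriv cond3 cond2b that] .
  obtain \<delta> where "0 < \<delta>" and near_0: "\<And>x. 0 < x \<Longrightarrow> x < \<delta> \<Longrightarrow> x * \<bar>f x\<bar> \<le> C + 1"
    using bound_near_0_if_Limsup_le[OF cond1] by blast
  have f_near_0: "x * f x \<le> C + 1" if "0 < x" "x < \<delta>" for x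
    using near_0[OF that] f_nonneg[OF that(1)] by simp
  have "0 \<le> integral {0<..} (\<lambda>x. phi_re (k + 1) (b * x) * f x)
            + integral {0<..} (\<lambda>x. phi_re (k + 3) (b * x) * f x)
            - 2 * integral {0<..} (\<lambda>x. phi_re (k + 2) (b * x) * f x)"
    using \<open>0 < \<delta>\<close> f_near_0
    by (intro integral_phi_re_second_difference_nonneg[OF b_pos f_deriv f_nonneg f'_nonpos]) auto
  then show ?thesis
    using lam_eq_integral_phi_re[OF b_pos] unfolding n
    by (simp add: numeral_eq_Suc)
qed

end
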